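(* Let $\mathcal C$ be a concept hierarchy, $r_1,r_2,\epsilon\in[0,1]$ with $r_1\le r_2(1-\epsilon)$, $m$ a positive integer, and let $\mathcal H$ be the network defined below with a fixed failed set $F$ satisfying the stated constraint. Then for every $B\subseteq C_0$ presented at time 0 and every concept $c$ with $c\notin supp_{r_1}(B)$, no neuron $v\in reps(c)$ fires at time $level(c)$.
   Context: Concept hierarchies: fix positive integers $\ell_{max},n,k$. A universal set $D$ of concepts is partitioned into disjoint sets $D_0,\dots,D_{\ell_{max}}$ with $|D_0|=n$; $level(c)=\ell$ for $c\in D_\ell$. A concept hierarchy $\mathcal C$ consists of $C\subseteq D$, with $C_\ell=C\cap D_\ell$, and for each $c\in C_\ell$ with $1\le\ell\le\ell_{max}$ a set $children(c)\subseteq C_{\ell-1}$, such that $|C_{\ell_{max}}|=k$, $|children(c)|=k$ for all such $c$, and $children(c)\cap children(c')=\emptyset$ for distinct $c,c'\in C_\ell$. For $B\subseteq D_0$ and $r\in[0,1]$: $B(0)=B\cap C_0$; for $1\le\ell\le\ell_{max}$, $B(\ell)=\{c\in C_\ell:|children(c)\cap B(\ell-1)|\ge rk\}$; $supp_r(B)=\bigcup_{\ell}B(\ell)$. Network $\mathcal H$: neurons partitioned into layers $N_0,\dots,N_{\ell_{max}}$. Each $c\in D_0$ has a set $reps(c)$ of $m$ neurons in $N_0$, each $c\in C$ with $level(c)\ge1$ a set $reps(c)$ of $m$ neurons in $N_{level(c)}$, all pairwise disjoint. For $u\in N_{\ell-1}$, $v\in N_\ell$: $w(u,v)=1$ iff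 $v\in reps(c)$ and $u\in reps(c')$ for a child $c'$ of $c$, else $0$. Threshold $\tau=r_2km(1-\epsilon)$. A fixed set $F$ of neurons is failed (failed neurons never fire), such that for every concept $c$ at least $m(1-\epsilon)$ neurons of $reps(c)$ are not in $F$. Input $B\subseteq C_0$ presented at time 0: a layer-0 neuron fires at time 0 iff it is in $\bigcup_{b\in B}reps(b)\setminus F$, and no layer-0 neuron fires at any other time. A non-failed $v\in N_\ell$, $\ell\ge1$, does not fire at time 0 and fires at time $t\ge1$ iff $\sum_{u\in N_{\ell-1}}w(u,v)x_u(t-1)\ge\tau$, where $x_u(s)\in\{0,1\}$ indicates whether $u$ fires at time $s$. *)

theory Defs
  imports Complex_Main
begin

definition concept_hierarchy ::
  "'c set \<Rightarrow> ('c \<Rightarrow> nat) \<Rightarrow> nat \<Rightarrow> nat \<Rightarrow> nat \<Rightarrow> 'c set \<Rightarrow> ('c \<Rightarrow> 'c set) \<Rightarrow> bool" where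
  "concept_hierarchy D level lmax n k C children \<longleftrightarrow>
     (\<forall>c\<in>D. level c \<le> lmax) \<and>
     card {c\<in>D. level c = 0} = n \<and>
     C \<subseteq> D \<and>
     card {c\<in>C. level c = lmax} = k \<and>
     (\<forall>c\<in>C. 1 \<le> level c \<longrightarrow>
        children c \<subseteq> {c'\<in>C. level c' = level c - 1} \<and> card (children c) = k) \<and>
     (\<forall>c\<in>C. \<forall>c'\<in>C. 1 \<le> level c \<and> level c' = level c \<and> c \<noteq> c' \<longrightarrow>
        children c \<inter> children c' = {})"

fun Blev :: "'c set \<Rightarrow> ('c \<Rightarrow> nat) \<Rightarrow> ('c \<Rightarrow> 'c set) \<Rightarrow> nat \<Rightarrow> real \<Rightarrow> 'c set \<Rightarrow> nat \<Rightarrow> 'c set" where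
  "Blev C level children k r B 0 = B \<inter> {c\<in>C. level c = 0}"
| "Blev C level children k r B (Suc l) =
     {c\<in>C. level c = Suc l \<and> real (card (children c \<inter> Blev C level children k r B l)) \<ge> r * real k}"

definition supp ::
  "'c set \<Rightarrow> ('c \<Rightarrow> nat) \<Rightarrow> ('c \<Rightarrow> 'c set) \<Rightarrow> nat \<Rightarrow> nat \<Rightarrow> real \<Rightarrow> 'c set \<Rightarrow> 'c set" where
  "supp C level children k lmax r B = (\<Union>l\<in>{0..lmax}. Blev C level children k r B l)"

definition rep_concepts :: "'c set \<Rightarrow> ('c \<Rightarrow> nat) \<Rightarrow> 'c set \<Rightarrow> 'c set" where
  "rep_concepts D level C = {c\<in>D. level c = 0} \<union> {c\<in>C. 1 \<le> level c}"

definition network ::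
  "'c set \<Rightarrow> ('c \<Rightarrow> nat) \<Rightarrow> nat \<Rightarrow> 'c set \<Rightarrow> 'n set \<Rightarrow> ('n \<Rightarrow> nat) \<Rightarrow> ('c \<Rightarrow> 'n set) \<Rightarrow> nat \<Rightarrow> bool" where
  "network D level lmax C N layer reps m \<longleftrightarrow>
     finite N \<and> (\<forall>u\<in>N. layer u \<le> lmax) \<and>
     (\<forall>c\<in>rep_concepts D level C.
        reps c \<subseteq> N \<and> (\<forall>u\<in>reps c. layer u = level c) \<and> card (reps c) = m) \<and>
     (\<forall>c\<in>rep_concepts D level C. \<forall>c'\<in>rep_concepts D level C.
        c \<noteq> c' \<longrightarrow> reps c \<inter> reps c' = {})"

definition weight :: "'c set \<Rightarrow> ('c \<Rightarrow> nat) \<Rightarrow> ('c \<Rightarrow> 'c set) \<Rightarrow> ('c \<Rightarrow> 'n set) \<Rightarrow> 'n \<Rightarrow> 'n \<Rightarrow> real" where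
  "weight C level children reps u v =
     (if \<exists>c\<in>C. 1 \<le> level c \<and> v \<in> reps c \<and> (\<exists>c'\<in>children c. u \<in> reps c') then 1 else 0)"

fun fires :: "'c set \<Rightarrow> ('c \<Rightarrow> nat) \<Rightarrow> ('c \<Rightarrow> 'c set) \<Rightarrow> ('c \<Rightarrow> 'n set) \<Rightarrow> 'n set \<Rightarrow> ('n \<Rightarrow> nat)
     \<Rightarrow> 'n set \<Rightarrow> real \<Rightarrow> 'c set \<Rightarrow> 'n \<Rightarrow> nat \<Rightarrow> bool" where
  "fires C level children reps N layer F tau B u 0 =
     (u \<in> N \<and> layer u = 0 \<and> u \<in> (\<Union>b\<in>B. reps b) - F)"
| "fires C level children reps N layer F tau B u (Suc t) =
     (u \<in> N \<and> u \<notin> F \<and> 1 \<le> layer u \<and>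
      (\<Sum>u'\<in>{u'\<in>N. layer u' = layer u - 1}.
          weight C level children reps u' u *
          (if fires C level children reps N layer F tau B u' t then 1 else 0)) \<ge> tau)"

end

theory Submission
  imports Defs
begin

text \<open>A neuron of reps c at level l + 1 receives weight only from
  the representatives of the children of c. By induction, a child whose representatives fire
  at time l lies in B(l), and c \<notin> B(l + 1) means fewer than r1 k such children, each with
  m representatives. So the input is below r1 k m \<le> r2 k m (1 - \<epsilon>), the threshold.\<close>

locale concept_network =
  fixes D C :: "'c set" and level :: "'c \<Rightarrow> nat" and lmax n k :: nat
    and children :: "'c \<Rightarrow> 'c set"
    and N :: "'n set" and layer :: "'n \<Rightarrow> nat" and reps :: "'c \<Rightarrow> 'n set" and m :: nat
  assumes hierarchy: "concept_hierarchy D level lmax n k C children"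
    and net: "network D level lmax C N layer reps m"
begin

lemma C_subset_D: "C \<subseteq> D"
  using hierarchy by (simp add: concept_hierarchy_def)

lemma level_le_lmax: "c \<in> rep_concepts D level C \<Longrightarrow> level c \<le> lmax"
  using hierarchy C_subset_D by (auto simp: concept_hierarchy_def rep_concepts_def)

lemma children_subset:
  "c \<in> C \<Longrightarrow> 1 \<le> level c \<Longrightarrow> children c \<subseteq> {c'\<in>C. level c' = level c - 1}"
  using hierarchy by (simp add: concept_hierarchy_def)

lemma card_children: "c \<in> C \<Longrightarrow> 1 \<le> level c \<Longrightarrow> card (children c) = k"
  using hierarchy by (simp add: concept_hierarchy_def)

lemma finite_children: "0 < k \<Longrightarrow> c \<in> C \<Longrightarrow> 1 \<le> level c \<Longrightarrow> finite (children c)"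
  using card_children card_ge_0_finite by metis

lemma children_subset_rep_concepts:
  "c \<in> C \<Longrightarrow> 1 \<le> level c \<Longrightarrow> children c \<subseteq> rep_concepts D level C"
  using children_subset C_subset_D by (fastforce simp: rep_concepts_def)

lemma finite_N: "finite N"
  using net by (simp add: network_def)

lemma finite_reps: "c \<in> rep_concepts D level C \<Longrightarrow> finite (reps c)"
  using net unfolding network_def by (meson finite_subset)

lemma card_reps: "c \<in> rep_concepts D level C \<Longrightarrow> card (reps c) = m"
  using net by (simp add: network_def)

lemma layer_reps: "c \<in> rep_concepts D level C \<Longrightarrow> u \<in> reps c \<Longrightarrow> layer u = level c"
  using net by (simp add: network_def)

lemma reps_inj:
  "c \<in> rep_concepts D level C \<Longrightarrow> c' \<in> rep_concepts D level C \<Longrightarrow> v \<in> reps c \<Longrightarrow> v \<in> reps c'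
    \<Longrightarrow> c = c'"
  using net unfolding network_def by blast

lemma card_UN_reps_le:
  assumes "finite G" and "G \<subseteq> rep_concepts D level C"
  shows "card (\<Union>c\<in>G. reps c) \<le> card G * m"
proof -
  have "card (\<Union>c\<in>G. reps c) \<le> (\<Sum>c\<in>G. card (reps c))"
    using assms(1) by (rule card_UN_le)
  also have "\<dots> = card G * m"
    using assms(2) card_reps by (simp add: subset_iff)
  finally show ?thesis .
qed

lemma weight_nonzero_imp_child:
  assumes "c \<in> rep_concepts D level C" and "v \<in> reps c"
    and "weight C level children reps u v \<noteq> 0"
  obtains c' where "c' \<in> children c" and "u \<in> reps c'"
proof -
  from assms(3) obtain c'' c' where
    "c'' \<in> C" "1 \<le> level c''" "v \<in> reps c''" "c' \<in> children c''" "u \<in> reps c'"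
    unfolding weight_def by (auto split: if_splits)
  moreover have "c'' = c"
    using reps_inj[OF _ assms(1) _ assms(2), of c''] calculation
    by (auto simp: rep_concepts_def)
  ultimately show ?thesis using that by blast
qed

lemma input_le_firing_children:
  fixes F :: "'n set" and tau :: real and B :: "'c set" and t :: nat
  assumes "0 < k" and "c \<in> C" and "1 \<le> level c" and "v \<in> reps c"
  defines "fired \<equiv> {c'\<in>children c. \<exists>u\<in>reps c'. fires C level children reps N layer F tau B u t}"
  shows "(\<Sum>u\<in>{u\<in>N. layer u = layer v - 1}. weight C level children reps u v *
            (if fires C level children reps N layer F tau B u t then 1 else 0))
         \<le> real (card fired * m)"
    (is "(\<Sum>u\<in>?S. ?input u) \<le> _")
proof -
  define T where "T = (\<Union>c'\<in>fired. reps c')"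
  have c_rep: "c \<in> rep_concepts D level C"
    using assms(2,3) by (simp add: rep_concepts_def)
  have fired_rep: "fired \<subseteq> rep_concepts D level C"
    using children_subset_rep_concepts[OF assms(2,3)] by (auto simp: fired_def)
  have finite_fired: "finite fired"
    using finite_children[OF assms(1-3)] by (simp add: fired_def)
  have "?input u \<le> of_bool (u \<in> T)" for u
  proof (cases "weight C level children reps u v \<noteq> 0 \<and> fires C level children reps N layer F tau B u t")
    case True
    then obtain c' where c': "c' \<in> children c" "u \<in> reps c'"
      using weight_nonzero_imp_child[OF c_rep assms(4)] by blast
    with True have "c' \<in> fired"
      unfolding fired_def by blast
    with c' have "u \<in> T" by (auto simp: T_def)
    then show ?thesis by (simp add: weight_def)
  qed auto
  then have "(\<Sum>u\<in>?S. ?input u) \<le> (\<Sum>u\<in>?S. of_bool (u \<in> T))"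
    by (rule sum_mono)
  also have "\<dots> = real (card (?S \<inter> T))"
    using finite_N by simp
  also have "\<dots> \<le> real (card T)"
  proof -
    have "finite T"
      unfolding T_def using finite_fired fired_rep finite_reps by blast
    then show ?thesis
      using card_mono[OF _ Int_lower2] by simp
  qed
  also have "\<dots> \<le> real (card fired * m)"
    using card_UN_reps_le[OF finite_fired fired_rep] unfolding T_def of_nat_le_iff .
  finally show ?thesis .
qed

lemma not_fires_0:
  assumes "B \<subseteq> {c'\<in>C. level c' = 0}"
    and "c \<in> rep_concepts D level C" and "c \<notin> B" and "v \<in> reps c"
  shows "\<not> fires C level children reps N layer F tau B v 0"
proof
  assume "fires C level children reps N layer F tau B v 0"
  then obtain b where "b \<in> B" and "v \<in> reps b" by auto
  moreover have "b \<in> rep_concepts D level C"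
    using \<open>b \<in> B\<close> assms(1) C_subset_D by (auto simp: rep_concepts_def)
  ultimately show False
    using reps_inj[OF assms(2) _ assms(4)] assms(3) by blast
qed

lemma not_fires_outside_Blev:
  assumes "0 < k" and "0 < m" and "r1 * real k * real m \<le> tau"
    and "B \<subseteq> {c'\<in>C. level c' = 0}"
    and "c \<in> rep_concepts D level C" and "c \<notin> Blev C level children k r1 B (level c)"
    and "v \<in> reps c"
  shows "\<not> fires C level children reps N layer F tau B v (level c)"
  using assms(5-7)
proof (induction "level c" arbitrary: c v)
  case 0
  then have "level c = 0" by simp
  moreover from this have "c \<notin> B"
    using "0.prems"(2) assms(4) by auto
  ultimately show ?case
    using not_fires_0[OF assms(4) "0.prems"(1) _ "0.prems"(3)] by simp
next
  case (Suc l)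
  let ?fires = "fires C level children reps N layer F tau B"
  let ?fired = "{c'\<in>children c. \<exists>u\<in>reps c'. ?fires u l}"
  let ?supported = "children c \<inter> Blev C level children k r1 B l"
  have level_c: "level c = Suc l"
    using Suc.hyps(2) by simp
  have c: "c \<in> C" "1 \<le> level c"
    using level_c Suc.prems(1) by (auto simp: rep_concepts_def)
  have "?fired \<subseteq> ?supported"
  proof
    fix c' assume "c' \<in> ?fired"
    then obtain u where c': "c' \<in> children c" "u \<in> reps c'" "?fires u l" by blast
    have level_c': "level c' = l"
      using children_subset[OF c] c'(1) level_c by auto
    have "c' \<in> rep_concepts D level C"
      using children_subset_rep_concepts[OF c] c'(1) by blast
    then have "c' \<in> Blev C level children k r1 B l"
      using Suc.hyps(1)[OF level_c'[symmetric] _ _ c'(2)] c'(3) level_c' by auto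
    with c'(1) show "c' \<in> ?supported" by blast
  qed
  then have "card ?fired \<le> card ?supported"
    by (rule card_mono[rotated]) (use finite_children[OF assms(1) c] in simp)
  moreover have "real (card ?supported) < r1 * real k"
    using Suc.prems(2) c(1) level_c by auto
  ultimately have "real (card ?fired * m) < r1 * real k * real m"
    using assms(2) by (simp add: mult_strict_right_mono le_less_trans)
  moreover have "layer v - 1 = l"
    using layer_reps[OF Suc.prems(1,3)] level_c by simp
  ultimately show ?case
    using input_le_firing_children[OF assms(1) c Suc.prems(3), of F tau B l] assms(3) level_c
    by simp
qed

end

theorem theorem7p4:
  fixes D C :: "'c set" and level :: "'c \<Rightarrow> nat" and children :: "'c \<Rightarrow> 'c set"
    and lmax n k m :: nat and r1 r2 \<epsilon> :: real
    and N F :: "'n set" and layer :: "'n \<Rightarrow> nat" and reps :: "'c \<Rightarrow> 'n set"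
    and B :: "'c set" and c :: 'c and v :: 'n
  assumes "0 < lmax" and "0 < n" and "0 < k" and "0 < m"
    and "concept_hierarchy D level lmax n k C children"
    and "0 \<le> r1" and "r1 \<le> 1" and "0 \<le> r2" and "r2 \<le> 1" and "0 \<le> \<epsilon>" and "\<epsilon> \<le> 1"
    and "r1 \<le> r2 * (1 - \<epsilon>)"
    and "network D level lmax C N layer reps m"
    and "\<forall>c'\<in>rep_concepts D level C. real (card (reps c' - F)) \<ge> real m * (1 - \<epsilon>)"
    and "B \<subseteq> {c'\<in>C. level c' = 0}"
    and "c \<in> rep_concepts D level C"
    and "c \<notin> supp C level children k lmax r1 B"
    and "v \<in> reps c"
  shows "\<not> fires C level children reps N layer F (r2 * real k * real m * (1 - \<epsilon>)) B v (level c)"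
proof -
  interpret concept_network D C level lmax n k children N layer reps m
    using assms(5,13) by unfold_locales
  have "r1 * (real k * real m) \<le> r2 * (1 - \<epsilon>) * (real k * real m)"
    using assms(12) by (intro mult_right_mono) auto
  then have threshold: "r1 * real k * real m \<le> r2 * real k * real m * (1 - \<epsilon>)"
    by (simp add: algebra_simps)
  have "c \<notin> Blev C level children k r1 B (level c)"
    using assms(17) level_le_lmax[OF assms(16)] by (auto simp: supp_def)
  then show ?thesis
    using not_fires_outside_Blev[OF assms(3,4) threshold assms(15,16)] assms(18) by blast
qed

end
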